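(* Let $\xi\in\mathbb{R}\setminus\{0\}$. (i) If either $|B|\ge|B|_c$, or $|B|<|B|_c$ and $|\xi|\le|\xi|^B_{vc}$, then $\alpha(s)\ge0$ for every $s\ge0$. (ii) If $|B|<|B|_c$ and $|\xi|>|\xi|^B_{vc}$, then there exists $s_0>0$ depending on $\rho_\pm,\mu_\pm,g,|B|,|\xi|$ such that $\alpha(s)<0$ for all $0<s\le s_0$.
   Context: $g>0$, $\rho_+>\rho_->0$, $[\rho]=\rho_+-\rho_-$, $\mu_\pm>0$, $B\ne0$; $\rho,\mu$ equal $\rho_+,\mu_+$ on $(0,1)$ and $\rho_-,\mu_-$ on $(-1,0)$. For $s\ge0$ and $\psi\in H_0^2((-1,1))$: $E_s(\psi)=\frac12\int_{-1}^1\big[s\mu(4\xi^2|\psi'|^2+|\xi^2\psi+\psi''|^2)+|B|^2(\xi^2|\psi'|^2+|\psi''|^2)\big]dx_2-\frac12\xi^2g[\rho]\psi(0)^2$, $J(\psi)=\frac12\int_{-1}^1\rho(\xi^2|\psi|^2+|\psi'|^2)dx_2$, $\alpha(s)=\inf\{E_s(\psi):\psi\in H_0^2((-1,1)),J(\psi)=1\}$. $|B|_c^2:=\sup\{g[\rho]\psi(0)^2/\int_{-1}^1|\psi'|^2: 0\ne\psi\in H_0^1((-1,1))\}$; for $|B|<|B|_c$, $(|\xi|^B_{vc})^2:=\inf\{|B|^2\int|\psi''|^2/(g[\rho]\psi(0)^2-|B|^2\int|\psi'|^2):\psi\in H_0^2((-1,1)),\ g[\rho]\psi(0)^2-|B|^2\int|\psi'|^2>0\}$.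 *)

theory Defs
  imports "HOL-Analysis.Analysis"
begin

text \<open>Piecewise constant density / viscosity: upper fluid on (0,1), lower fluid on (-1,0).
  The value at the single point 0 is irrelevant for all integrals.\<close>
definition pw :: "real \<Rightarrow> real \<Rightarrow> real \<Rightarrow> real" where
  "pw vp vm x = (if x > 0 then vp else vm)"

text \<open>One-dimensional Sobolev spaces on (-1,1), via the standard characterisation:
  psi is in H_0^1((-1,1)) with weak derivative d iff d is in L^2(-1,1),
  psi(x) = psi(-1) + int_{-1}^x d on [-1,1], and psi(-1) = psi(1) = 0.\<close>
definition H01 :: "(real \<Rightarrow> real) \<Rightarrow> (real \<Rightarrow> real) \<Rightarrow> bool" where
  "H01 psi d \<longleftrightarrow>
     d \<in> borel_measurable lborel \<and>
     set_integrable lborel {-1..1} d \<and>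
     set_integrable lborel {-1..1} (\<lambda>x. (d x)\<^sup>2) \<and>
     psi (-1) = 0 \<and> psi 1 = 0 \<and>
     (\<forall>x\<in>{-1..1}. psi x = psi (-1) + (LINT t:{-1..x}|lborel. d t))"

definition H02 :: "(real \<Rightarrow> real) \<Rightarrow> (real \<Rightarrow> real) \<Rightarrow> (real \<Rightarrow> real) \<Rightarrow> bool" where
  "H02 psi d1 d2 \<longleftrightarrow> H01 psi d1 \<and> H01 d1 d2"

definition Efun :: "real \<Rightarrow> real \<Rightarrow> real \<Rightarrow> real \<Rightarrow> real \<Rightarrow> real \<Rightarrow> real \<Rightarrow> real
    \<Rightarrow> (real \<Rightarrow> real) \<Rightarrow> (real \<Rightarrow> real) \<Rightarrow> (real \<Rightarrow> real) \<Rightarrow> real" where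
  "Efun g rp rm mp mm b xi s psi d1 d2 =
     (1/2) * (LINT x:{-1..1}|lborel.
        s * pw mp mm x * (4 * xi\<^sup>2 * (d1 x)\<^sup>2 + (xi\<^sup>2 * psi x + d2 x)\<^sup>2)
        + b\<^sup>2 * (xi\<^sup>2 * (d1 x)\<^sup>2 + (d2 x)\<^sup>2))
     - (1/2) * xi\<^sup>2 * g * (rp - rm) * (psi 0)\<^sup>2"

definition Jfun :: "real \<Rightarrow> real \<Rightarrow> real \<Rightarrow> (real \<Rightarrow> real) \<Rightarrow> (real \<Rightarrow> real) \<Rightarrow> real" where
  "Jfun rp rm xi psi d1 =
     (1/2) * (LINT x:{-1..1}|lborel. pw rp rm x * (xi\<^sup>2 * (psi x)\<^sup>2 + (d1 x)\<^sup>2))"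

text \<open>alpha(s), as an extended real infimum (so no boundedness issue arises).\<close>
definition alpha :: "real \<Rightarrow> real \<Rightarrow> real \<Rightarrow> real \<Rightarrow> real \<Rightarrow> real \<Rightarrow> real \<Rightarrow> real \<Rightarrow> ereal" where
  "alpha g rp rm mp mm b xi s =
     Inf {ereal (Efun g rp rm mp mm b xi s psi d1 d2) | psi d1 d2.
            H02 psi d1 d2 \<and> Jfun rp rm xi psi d1 = 1}"

definition Bc2 :: "real \<Rightarrow> real \<Rightarrow> real \<Rightarrow> ereal" where
  "Bc2 g rp rm =
     Sup {ereal (g * (rp - rm) * (psi 0)\<^sup>2 / (LINT x:{-1..1}|lborel. (d x)\<^sup>2)) | psi d.
            H01 psi d \<and> (\<exists>x\<in>{-1..1}. psi x \<noteq> 0)}"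

definition xivc2 :: "real \<Rightarrow> real \<Rightarrow> real \<Rightarrow> real \<Rightarrow> ereal" where
  "xivc2 g rp rm b =
     Inf {ereal (b\<^sup>2 * (LINT x:{-1..1}|lborel. (d2 x)\<^sup>2)
                 / (g * (rp - rm) * (psi 0)\<^sup>2 - b\<^sup>2 * (LINT x:{-1..1}|lborel. (d1 x)\<^sup>2))) | psi d1 d2.
            H02 psi d1 d2 \<and> g * (rp - rm) * (psi 0)\<^sup>2 - b\<^sup>2 * (LINT x:{-1..1}|lborel. (d1 x)\<^sup>2) > 0}"

end

theory Submission
  imports Defs
begin

text \<open>
  For admissible \<psi>, 2 E_s(\<psi>) = s V(\<psi>) + |B|^2 \<integral>|\<psi>''|^2 - \<xi>^2 D(\<psi>) with a viscous part V \<ge> 0 and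
  D(\<psi>) = g[\<rho>]\<psi>(0)^2 - |B|^2 \<integral>|\<psi>'|^2. If |B| \<ge> |B|_c then D \<le> 0 by the definition of |B|_c;
  otherwise, whenever D > 0, the definition of |\<xi>|^B_vc bounds \<xi>^2 D by |B|^2 \<integral>|\<psi>''|^2.
  Either way E_s \<ge> 0. Conversely, if |\<xi>| > |\<xi>|^B_vc some \<psi> makes the s-independent part
  negative, so E_s(\<psi>) < 0 for all small s > 0; rescaling \<psi> to J(\<psi>) = 1 (possible since
  \<psi>(0) \<noteq> 0 forces \<integral>|\<psi>'|^2 > 0) gives \<alpha>(s) < 0.
\<close>

definition L2sq :: "(real \<Rightarrow> real) \<Rightarrow> real" where
  "L2sq d = (LINT x:{-1..1}|lborel. (d x)\<^sup>2)"

definition viscous_energy ::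
    "real \<Rightarrow> real \<Rightarrow> real \<Rightarrow> (real \<Rightarrow> real) \<Rightarrow> (real \<Rightarrow> real) \<Rightarrow> (real \<Rightarrow> real) \<Rightarrow> real" where
  "viscous_energy mp mm xi psi d1 d2 =
     (LINT x:{-1..1}|lborel. pw mp mm x * (4 * xi\<^sup>2 * (d1 x)\<^sup>2 + (xi\<^sup>2 * psi x + d2 x)\<^sup>2))"

definition buoyancy_excess ::
    "real \<Rightarrow> real \<Rightarrow> real \<Rightarrow> real \<Rightarrow> (real \<Rightarrow> real) \<Rightarrow> (real \<Rightarrow> real) \<Rightarrow> real" where
  "buoyancy_excess g rp rm b psi d1 = g * (rp - rm) * (psi 0)\<^sup>2 - b\<^sup>2 * L2sq d1"

lemma pw_measurable [measurable]: "pw a b \<in> borel_measurable lborel"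
  unfolding pw_def by measurable

lemma min_le_pw: "min a b \<le> pw a b x"
  by (simp add: pw_def)

lemma abs_pw_le: "\<bar>pw a b x\<bar> \<le> \<bar>a\<bar> + \<bar>b\<bar>"
  by (simp add: pw_def)

lemma set_integrable_pw_mult:
  assumes "set_integrable lborel A f"
  shows "set_integrable lborel A (\<lambda>x. pw a b x * f x)"
proof (rule set_integrable_bound)
  show "set_integrable lborel A (\<lambda>x. (\<bar>a\<bar> + \<bar>b\<bar>) * f x)"
    using assms by (rule set_integrable_mult_right)
  have "(\<lambda>x. indicator A x *\<^sub>R f x) \<in> borel_measurable lborel"
    using assms unfolding set_integrable_def by (rule borel_measurable_integrable)
  then have "(\<lambda>x. pw a b x * (indicator A x *\<^sub>R f x)) \<in> borel_measurable lborel"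
    by measurable
  then show "set_borel_measurable lborel A (\<lambda>x. pw a b x * f x)"
    unfolding set_borel_measurable_def by (simp add: mult.left_commute)
  show "AE x in lborel. x \<in> A \<longrightarrow> norm (pw a b x * f x) \<le> norm ((\<bar>a\<bar> + \<bar>b\<bar>) * f x)"
    by (auto simp: abs_mult intro!: mult_right_mono abs_pw_le)
qed

lemma set_integrable_mult_of_squares:
  fixes f g :: "'a \<Rightarrow> real"
  assumes "set_integrable M A (\<lambda>x. (f x)\<^sup>2)" "set_integrable M A (\<lambda>x. (g x)\<^sup>2)"
    and "set_borel_measurable M A (\<lambda>x. f x * g x)"
  shows "set_integrable M A (\<lambda>x. f x * g x)"
proof (rule set_integrable_bound[OF _ assms(3)])
  show "set_integrable M A (\<lambda>x. (f x)\<^sup>2 + (g x)\<^sup>2)"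
    using assms(1,2) by (rule set_integral_add)
  have "\<bar>u * v\<bar> \<le> u\<^sup>2 + v\<^sup>2" for u v :: real
    using sum_squares_bound[of u v] sum_squares_bound[of "-u" v] by (auto simp: abs_if)
  then show "AE x in M. x \<in> A \<longrightarrow> norm (f x * g x) \<le> norm ((f x)\<^sup>2 + (g x)\<^sup>2)"
    by auto
qed

lemma set_integral_nonneg_real:
  assumes "\<And>x. x \<in> A \<Longrightarrow> 0 \<le> f x"
  shows "0 \<le> (LINT x:A|M. (f x :: real))"
  unfolding set_lebesgue_integral_def
  by (intro integral_nonneg_AE AE_I2) (use assms in \<open>auto simp: indicator_def\<close>)

lemma L2sq_nonneg: "0 \<le> L2sq d"
  unfolding L2sq_def by (rule set_integral_nonneg_real) simp

lemma viscous_energy_nonneg: "0 < mp \<Longrightarrow> 0 < mm \<Longrightarrow> 0 \<le> viscous_energy mp mm xi psi d1 d2"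
  unfolding viscous_energy_def
  by (rule set_integral_nonneg_real) (intro mult_nonneg_nonneg order_trans[OF _ min_le_pw]; simp)

lemma H01_continuous_on:
  assumes "H01 psi d"
  shows "continuous_on {-1..1} psi"
proof -
  have d: "set_integrable lborel {-1..1} d"
    and psi: "\<forall>x\<in>{-1..1}. psi x = psi (-1) + (LINT t:{-1..x}|lborel. d t)"
    using assms unfolding H01_def by auto
  have "psi x = psi (-1) + integral {-1..x} d" if "x \<in> {-1..1}" for x
  proof -
    have "set_integrable lborel {-1..x} d"
      using d by (rule set_integrable_subset) (use that in auto)
    then show ?thesis
      using psi that set_borel_integral_eq_integral(2) by metis
  qed
  moreover have "continuous_on {-1..1} (\<lambda>x. psi (-1) + integral {-1..x} d)"
    using set_borel_integral_eq_integral(1)[OF d]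
    by (intro continuous_intros indefinite_integral_continuous_1)
  ultimately show ?thesis
    using continuous_on_eq by (metis (no_types, lifting))
qed

text \<open>If the weak derivative vanishes a.e., then \<psi>(0) = \<psi>(-1) = 0.\<close>
lemma H01_L2sq_pos:
  assumes "H01 psi d" and "psi 0 \<noteq> 0"
  shows "0 < L2sq d"
proof (rule ccontr)
  assume "\<not> 0 < L2sq d"
  then have "L2sq d = 0"
    using L2sq_nonneg[of d] by linarith
  moreover have sq: "set_integrable lborel {-1..1::real} (\<lambda>x. (d x)\<^sup>2)"
    and psi: "\<forall>x\<in>{-1..1}. psi x = psi (-1) + (LINT t:{-1..x}|lborel. d t)" "psi (-1) = 0"
    using assms(1) unfolding H01_def by auto
  ultimately have "AE x in lborel. indicator {-1..1::real} x *\<^sub>R (d x)\<^sup>2 = 0"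
    using integral_nonneg_eq_0_iff_AE[of lborel "\<lambda>x. indicator {-1..1::real} x *\<^sub>R (d x)\<^sup>2"]
    unfolding L2sq_def set_integrable_def set_lebesgue_integral_def by auto
  then have "AE x in lborel. indicator {-1..0::real} x *\<^sub>R d x = 0"
    by eventually_elim (auto simp: indicator_def split: if_splits)
  then have "(LINT t:{-1..0}|lborel. d t) = 0"
    unfolding set_lebesgue_integral_def by (rule integral_eq_zero_AE)
  then show False
    using psi assms(2) by auto
qed

lemma H02_integrable:
  assumes "H02 psi d1 d2"
  shows "set_integrable lborel {-1..1} (\<lambda>x. pw a b x * (4 * xi\<^sup>2 * (d1 x)\<^sup>2 + (xi\<^sup>2 * psi x + d2 x)\<^sup>2))"
    and "set_integrable lborel {-1..1} (\<lambda>x. pw a b x * (xi\<^sup>2 * (psi x)\<^sup>2 + (d1 x)\<^sup>2))"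
    and "set_integrable lborel {-1..1} (\<lambda>x. (d1 x)\<^sup>2)"
    and "set_integrable lborel {-1..1} (\<lambda>x. (d2 x)\<^sup>2)"
proof -
  have [measurable]: "d1 \<in> borel_measurable lborel" "d2 \<in> borel_measurable lborel"
    and d1: "set_integrable lborel {-1..1} (\<lambda>x. (d1 x)\<^sup>2)"
    and d2: "set_integrable lborel {-1..1} (\<lambda>x. (d2 x)\<^sup>2)"
    and H1: "H01 psi d1"
    using assms unfolding H02_def H01_def by auto
  have cont: "continuous_on {-1..1} psi"
    using H1 by (rule H01_continuous_on)
  have psi_sq: "set_integrable lborel {-1..1} (\<lambda>x. (psi x)\<^sup>2)"
    using cont by (intro borel_integrable_atLeastAtMost' continuous_intros)
  have "set_borel_measurable lborel {-1..1} psi"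
    using borel_integrable_atLeastAtMost'[OF cont]
    unfolding set_integrable_def set_borel_measurable_def by (rule borel_measurable_integrable)
  then have "set_borel_measurable lborel {-1..1} (\<lambda>x. psi x * d2 x)"
    unfolding set_borel_measurable_def by (simp add: mult.assoc[symmetric])
  then have psi_d2: "set_integrable lborel {-1..1} (\<lambda>x. psi x * d2 x)"
    using psi_sq d2 by (intro set_integrable_mult_of_squares)
  have "(\<lambda>x. 4 * xi\<^sup>2 * (d1 x)\<^sup>2 + (xi\<^sup>2 * psi x + d2 x)\<^sup>2)
     = (\<lambda>x. 4 * xi\<^sup>2 * (d1 x)\<^sup>2 + xi\<^sup>2 * xi\<^sup>2 * (psi x)\<^sup>2 + 2 * xi\<^sup>2 * (psi x * d2 x) + (d2 x)\<^sup>2)"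
    by (simp add: power2_eq_square algebra_simps)
  then have "set_integrable lborel {-1..1} (\<lambda>x. 4 * xi\<^sup>2 * (d1 x)\<^sup>2 + (xi\<^sup>2 * psi x + d2 x)\<^sup>2)"
    using d1 d2 psi_sq psi_d2 by (auto intro!: set_integral_add set_integrable_mult_right)
  then show "set_integrable lborel {-1..1} (\<lambda>x. pw a b x * (4 * xi\<^sup>2 * (d1 x)\<^sup>2 + (xi\<^sup>2 * psi x + d2 x)\<^sup>2))"
    by (rule set_integrable_pw_mult)
  have "set_integrable lborel {-1..1} (\<lambda>x. xi\<^sup>2 * (psi x)\<^sup>2 + (d1 x)\<^sup>2)"
    using d1 psi_sq by (intro set_integral_add set_integrable_mult_right)
  then show "set_integrable lborel {-1..1} (\<lambda>x. pw a b x * (xi\<^sup>2 * (psi x)\<^sup>2 + (d1 x)\<^sup>2))"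
    by (rule set_integrable_pw_mult)
  show "set_integrable lborel {-1..1} (\<lambda>x. (d1 x)\<^sup>2)" "set_integrable lborel {-1..1} (\<lambda>x. (d2 x)\<^sup>2)"
    using d1 d2 .
qed

lemma Efun_eq:
  assumes "H02 psi d1 d2"
  shows "Efun g rp rm mp mm b xi s psi d1 d2 =
    (s * viscous_energy mp mm xi psi d1 d2 + b\<^sup>2 * L2sq d2 - xi\<^sup>2 * buoyancy_excess g rp rm b psi d1) / 2"
proof -
  note int = H02_integrable(1)[OF assms, where a = mp and b = mm and xi = xi]
    H02_integrable(3,4)[OF assms]
  have "(LINT x:{-1..1}|lborel. s * pw mp mm x * (4 * xi\<^sup>2 * (d1 x)\<^sup>2 + (xi\<^sup>2 * psi x + d2 x)\<^sup>2)
          + b\<^sup>2 * (xi\<^sup>2 * (d1 x)\<^sup>2 + (d2 x)\<^sup>2))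
      = (LINT x:{-1..1}|lborel. s * (pw mp mm x * (4 * xi\<^sup>2 * (d1 x)\<^sup>2 + (xi\<^sup>2 * psi x + d2 x)\<^sup>2))
          + (b\<^sup>2 * xi\<^sup>2 * (d1 x)\<^sup>2 + b\<^sup>2 * (d2 x)\<^sup>2))"
    by (simp add: algebra_simps)
  also have "\<dots> = s * viscous_energy mp mm xi psi d1 d2 + (b\<^sup>2 * xi\<^sup>2 * L2sq d1 + b\<^sup>2 * L2sq d2)"
    using int by (simp add: set_integral_add viscous_energy_def L2sq_def)
  finally have integral: "(LINT x:{-1..1}|lborel. s * pw mp mm x * (4 * xi\<^sup>2 * (d1 x)\<^sup>2
          + (xi\<^sup>2 * psi x + d2 x)\<^sup>2) + b\<^sup>2 * (xi\<^sup>2 * (d1 x)\<^sup>2 + (d2 x)\<^sup>2))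
      = s * viscous_energy mp mm xi psi d1 d2 + (b\<^sup>2 * xi\<^sup>2 * L2sq d1 + b\<^sup>2 * L2sq d2)" .
  show ?thesis
    unfolding Efun_def integral buoyancy_excess_def by (simp add: field_simps)
qed

lemma H01_scale:
  assumes "H01 psi d"
  shows "H01 (\<lambda>x. c * psi x) (\<lambda>x. c * d x)"
proof -
  have [measurable]: "d \<in> borel_measurable lborel"
    and d: "set_integrable lborel {-1..1} d" "set_integrable lborel {-1..1} (\<lambda>x. (d x)\<^sup>2)"
    and bdry: "psi (-1) = 0" "psi 1 = 0"
    and psi: "\<forall>x\<in>{-1..1}. psi x = psi (-1) + (LINT t:{-1..x}|lborel. d t)"
    using assms unfolding H01_def by auto
  have "\<forall>x\<in>{-1..1}. c * psi x = c * psi (-1) + (LINT t:{-1..x}|lborel. c * d t)"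
  proof
    fix x :: real
    assume "x \<in> {-1..1}"
    with psi show "c * psi x = c * psi (-1) + (LINT t:{-1..x}|lborel. c * d t)"
      by (simp only: set_integral_mult_right flip: distrib_left)
  qed
  with d bdry show ?thesis
    unfolding H01_def power_mult_distrib
    by (intro conjI set_integrable_mult_right) (simp_all, measurable)
qed

lemma Efun_scale:
  "Efun g rp rm mp mm b xi s (\<lambda>x. c * psi x) (\<lambda>x. c * d1 x) (\<lambda>x. c * d2 x)
     = c\<^sup>2 * Efun g rp rm mp mm b xi s psi d1 d2"
proof -
  have integrand: "(\<lambda>x. s * pw mp mm x * (4 * xi\<^sup>2 * (c * d1 x)\<^sup>2 + (xi\<^sup>2 * (c * psi x) + c * d2 x)\<^sup>2)
          + b\<^sup>2 * (xi\<^sup>2 * (c * d1 x)\<^sup>2 + (c * d2 x)\<^sup>2))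
      = (\<lambda>x. c\<^sup>2 * (s * pw mp mm x * (4 * xi\<^sup>2 * (d1 x)\<^sup>2 + (xi\<^sup>2 * psi x + d2 x)\<^sup>2)
          + b\<^sup>2 * (xi\<^sup>2 * (d1 x)\<^sup>2 + (d2 x)\<^sup>2)))"
    by (rule ext) algebra
  show ?thesis
    unfolding Efun_def integrand set_integral_mult_right by (simp add: field_simps)
qed

lemma Jfun_scale:
  "Jfun rp rm xi (\<lambda>x. c * psi x) (\<lambda>x. c * d1 x) = c\<^sup>2 * Jfun rp rm xi psi d1"
proof -
  have "(\<lambda>x. pw rp rm x * (xi\<^sup>2 * (c * psi x)\<^sup>2 + (c * d1 x)\<^sup>2))
      = (\<lambda>x. c\<^sup>2 * (pw rp rm x * (xi\<^sup>2 * (psi x)\<^sup>2 + (d1 x)\<^sup>2)))"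
    by (rule ext) algebra
  then show ?thesis
    unfolding Jfun_def set_integral_mult_right by simp
qed

lemma Jfun_pos:
  assumes "0 < rp" "0 < rm" "H02 psi d1 d2" "psi 0 \<noteq> 0"
  shows "0 < Jfun rp rm xi psi d1"
proof -
  have "(LINT x:{-1..1}|lborel. min rp rm * (d1 x)\<^sup>2)
      \<le> (LINT x:{-1..1}|lborel. pw rp rm x * (xi\<^sup>2 * (psi x)\<^sup>2 + (d1 x)\<^sup>2))"
  proof (rule set_integral_mono)
    show "set_integrable lborel {-1..1} (\<lambda>x. min rp rm * (d1 x)\<^sup>2)"
      using H02_integrable(3)[OF assms(3)] by (rule set_integrable_mult_right)
    show "set_integrable lborel {-1..1} (\<lambda>x. pw rp rm x * (xi\<^sup>2 * (psi x)\<^sup>2 + (d1 x)\<^sup>2))"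
      using assms(3) by (rule H02_integrable(2))
    fix x
    show "min rp rm * (d1 x)\<^sup>2 \<le> pw rp rm x * (xi\<^sup>2 * (psi x)\<^sup>2 + (d1 x)\<^sup>2)"
      using assms(1,2) min_le_pw[of rp rm x]
      by (intro mult_mono) auto
  qed
  moreover have "0 < min rp rm * L2sq d1"
    using assms H01_L2sq_pos[of psi d1] unfolding H02_def by simp
  ultimately show ?thesis
    unfolding Jfun_def L2sq_def set_integral_mult_right by linarith
qed

lemma alpha_le_ratio:
  assumes "H02 psi d1 d2" "0 < Jfun rp rm xi psi d1"
  shows "alpha g rp rm mp mm b xi s
           \<le> ereal (Efun g rp rm mp mm b xi s psi d1 d2 / Jfun rp rm xi psi d1)"
proof -
  define c where "c = 1 / sqrt (Jfun rp rm xi psi d1)"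
  have c2: "c\<^sup>2 = 1 / Jfun rp rm xi psi d1"
    unfolding c_def using assms(2) by (simp add: power_divide)
  have "H02 (\<lambda>x. c * psi x) (\<lambda>x. c * d1 x) (\<lambda>x. c * d2 x)"
    using assms(1) unfolding H02_def by (auto intro: H01_scale)
  moreover have "Jfun rp rm xi (\<lambda>x. c * psi x) (\<lambda>x. c * d1 x) = 1"
    unfolding Jfun_scale c2 using assms(2) by simp
  ultimately have "alpha g rp rm mp mm b xi s
      \<le> ereal (Efun g rp rm mp mm b xi s (\<lambda>x. c * psi x) (\<lambda>x. c * d1 x) (\<lambda>x. c * d2 x))"
    unfolding alpha_def by (intro Inf_lower) blast
  then show ?thesis
    unfolding Efun_scale c2 by simp
qed

lemma buoyancy_excess_nonpos:
  assumes "Bc2 g rp rm \<le> ereal (b\<^sup>2)" "H01 psi d1"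
  shows "buoyancy_excess g rp rm b psi d1 \<le> 0"
proof (rule ccontr)
  assume "\<not> buoyancy_excess g rp rm b psi d1 \<le> 0"
  then have excess: "b\<^sup>2 * L2sq d1 < g * (rp - rm) * (psi 0)\<^sup>2"
    unfolding buoyancy_excess_def by simp
  moreover have "0 \<le> b\<^sup>2 * L2sq d1"
    by (simp add: L2sq_nonneg)
  ultimately have "psi 0 \<noteq> 0"
    by auto
  then have pos: "0 < L2sq d1"
    using assms(2) by (rule H01_L2sq_pos[rotated])
  have "ereal (g * (rp - rm) * (psi 0)\<^sup>2 / L2sq d1) \<le> Bc2 g rp rm"
    unfolding Bc2_def L2sq_def by (rule Sup_upper) (use assms(2) \<open>psi 0 \<noteq> 0\<close> in force)
  then have "ereal (g * (rp - rm) * (psi 0)\<^sup>2 / L2sq d1) \<le> ereal (b\<^sup>2)"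
    using assms(1) by (rule order_trans)
  then have "g * (rp - rm) * (psi 0)\<^sup>2 / L2sq d1 \<le> b\<^sup>2"
    by simp
  with pos excess show False
    by (simp add: pos_divide_le_eq)
qed

lemma xivc2_le_ratio:
  assumes "H02 psi d1 d2" "0 < buoyancy_excess g rp rm b psi d1"
  shows "xivc2 g rp rm b \<le> ereal (b\<^sup>2 * L2sq d2 / buoyancy_excess g rp rm b psi d1)"
  unfolding xivc2_def L2sq_def
  by (rule Inf_lower) (use assms in \<open>force simp: buoyancy_excess_def L2sq_def\<close>)

lemma inviscid_energy_nonneg:
  assumes "Bc2 g rp rm \<le> ereal (b\<^sup>2) \<or> ereal (xi\<^sup>2) \<le> xivc2 g rp rm b" "H02 psi d1 d2"
  shows "0 \<le> b\<^sup>2 * L2sq d2 - xi\<^sup>2 * buoyancy_excess g rp rm b psi d1"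
proof (cases "0 < buoyancy_excess g rp rm b psi d1")
  case False
  then have "xi\<^sup>2 * buoyancy_excess g rp rm b psi d1 \<le> 0"
    by (simp add: mult_nonneg_nonpos)
  moreover have "0 \<le> b\<^sup>2 * L2sq d2"
    by (simp add: L2sq_nonneg)
  ultimately show ?thesis
    by linarith
next
  case True
  then have "\<not> Bc2 g rp rm \<le> ereal (b\<^sup>2)"
    using buoyancy_excess_nonpos assms(2) unfolding H02_def by fastforce
  then have "ereal (xi\<^sup>2) \<le> ereal (b\<^sup>2 * L2sq d2 / buoyancy_excess g rp rm b psi d1)"
    using assms(1) xivc2_le_ratio[OF assms(2) True] by (blast intro: order_trans)
  with True show ?thesis
    by (simp add: pos_le_divide_eq)
qed

lemma affine_neg_near_zero:
  fixes a c :: real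
  assumes "0 \<le> a" "c < 0"
  shows "\<exists>s0>0. \<forall>s. 0 < s \<and> s \<le> s0 \<longrightarrow> s * a + c < 0"
proof (intro exI conjI allI impI)
  show "0 < - c / (a + 1)"
    using assms by (intro divide_pos_pos) auto
  fix s assume "0 < s \<and> s \<le> - c / (a + 1)"
  then have "s * a \<le> - c / (a + 1) * a"
    using assms(1) by (intro mult_right_mono) auto
  also have "\<dots> < - c"
    using assms by (simp add: field_simps)
  finally show "s * a + c < 0"
    by simp
qed

lemma alpha_nonneg:
  assumes "0 < mp" "0 < mm" "0 \<le> s"
    and "Bc2 g rp rm \<le> ereal (b\<^sup>2) \<or> ereal (xi\<^sup>2) \<le> xivc2 g rp rm b"
  shows "0 \<le> alpha g rp rm mp mm b xi s"
  unfolding alpha_def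
proof (rule Inf_greatest, clarify)
  fix psi d1 d2
  assume adm: "H02 psi d1 d2"
  have "0 \<le> s * viscous_energy mp mm xi psi d1 d2"
    using assms(3) viscous_energy_nonneg[OF assms(1,2)] by simp
  moreover have "0 \<le> b\<^sup>2 * L2sq d2 - xi\<^sup>2 * buoyancy_excess g rp rm b psi d1"
    using assms(4) adm by (rule inviscid_energy_nonneg)
  ultimately show "0 \<le> ereal (Efun g rp rm mp mm b xi s psi d1 d2)"
    unfolding Efun_eq[OF adm] by simp
qed

lemma alpha_neg_for_small_s:
  assumes "0 < rp" "0 < rm" "0 < mp" "0 < mm" and "xivc2 g rp rm b < ereal (xi\<^sup>2)"
  shows "\<exists>s0>0. \<forall>s. 0 < s \<and> s \<le> s0 \<longrightarrow> alpha g rp rm mp mm b xi s < 0"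
proof -
  obtain psi d1 d2 where adm: "H02 psi d1 d2"
    and excess: "0 < buoyancy_excess g rp rm b psi d1"
    and ratio: "b\<^sup>2 * L2sq d2 / buoyancy_excess g rp rm b psi d1 < xi\<^sup>2"
    using assms(5) unfolding xivc2_def Inf_less_iff buoyancy_excess_def L2sq_def by force
  define M where "M = b\<^sup>2 * L2sq d2 - xi\<^sup>2 * buoyancy_excess g rp rm b psi d1"
  have "M < 0"
    using ratio excess unfolding M_def by (simp add: pos_divide_less_eq)
  then obtain s0 where "0 < s0"
    and small: "\<And>s. 0 < s \<Longrightarrow> s \<le> s0 \<Longrightarrow> s * viscous_energy mp mm xi psi d1 d2 + M < 0"
    using affine_neg_near_zero[OF viscous_energy_nonneg[OF assms(3,4)]] by blast
  have "0 \<le> b\<^sup>2 * L2sq d1"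
    by (simp add: L2sq_nonneg)
  then have "psi 0 \<noteq> 0"
    using excess unfolding buoyancy_excess_def by auto
  then have J: "0 < Jfun rp rm xi psi d1"
    using Jfun_pos assms(1,2) adm by blast
  show ?thesis
  proof (intro exI conjI allI impI)
    fix s assume "0 < s \<and> s \<le> s0"
    then have "s * viscous_energy mp mm xi psi d1 d2 + M < 0"
      using small by blast
    then have "Efun g rp rm mp mm b xi s psi d1 d2 < 0"
      unfolding Efun_eq[OF adm] M_def by (simp add: algebra_simps)
    then have "ereal (Efun g rp rm mp mm b xi s psi d1 d2 / Jfun rp rm xi psi d1) < 0"
      using J by (simp add: divide_neg_pos)
    with alpha_le_ratio[OF adm J] show "alpha g rp rm mp mm b xi s < 0"
      by (rule le_less_trans)
  qed (rule \<open>0 < s0\<close>)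
qed

theorem lemma3p4:
  fixes g rp rm mp mm xi :: real and B :: "'a::real_normed_vector"
  assumes "g > 0" and "rp > rm" and "rm > 0" and "mp > 0" and "mm > 0"
    and "B \<noteq> 0" and "xi \<noteq> 0"
  shows "((ereal ((norm B)\<^sup>2) \<ge> Bc2 g rp rm
            \<or> (ereal ((norm B)\<^sup>2) < Bc2 g rp rm \<and> ereal (xi\<^sup>2) \<le> xivc2 g rp rm (norm B)))
           \<longrightarrow> (\<forall>s\<ge>0. alpha g rp rm mp mm (norm B) xi s \<ge> 0))
       \<and> ((ereal ((norm B)\<^sup>2) < Bc2 g rp rm \<and> ereal (xi\<^sup>2) > xivc2 g rp rm (norm B))
           \<longrightarrow> (\<exists>s0>0. \<forall>s. 0 < s \<and> s \<le> s0 \<longrightarrow> alpha g rp rm mp mm (norm B) xi s < 0))"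
  using alpha_nonneg[OF assms(4,5)] alpha_neg_for_small_s[OF _ assms(3-5)] assms(2,3)
  by auto

end
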